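(* Let $n\ge 1$ be an integer, $0<\epsilon\le 1$, $0<\tau<1$, and let $G=(V,E)$ be a comparison graph. Suppose that (1) $|E|\ge \dfrac{4n}{\tau^2\epsilon^4}$, (2) $|E|\ge \dfrac{16n}{(1-\tau)^2\epsilon^4}$, and (3) $\dfrac{c(G)}{|E|^2}\le \dfrac{(1-\tau)^2\epsilon^2}{16\sqrt n}$. Then the collision-based algorithm $(G,\tau)$ is an $\epsilon$-uniformity tester for domain $[n]$.
   Context: Notation: $[n]=\{1,\dots,n\}$; $\Delta([n])$ is the set of probability distributions on $[n]$; $P_i$ is the probability of $i$ under $P$; $U_n$ is the uniform distribution on $[n]$; $\|P-Q\|=\sum_{i=1}^n|P_i-Q_i|$ ($\ell_1$ distance). A comparison graph is a finite simple undirected graph $G=(V,E)$. Given $P\in\Delta([n])$, each vertex $v\in V$ is assigned an independent sample $S(v)\sim P$; for an edge $e=\{u,v\}\in E$ the collision indicator is $\mathbf 1_e=\mathbf 1[S(u)=S(v)]$. For $\tau\in[0,1]$, the collision-based algorithm $(G,\tau)$ computes $Z=\sum_{e\in E}\mathbf 1_e$ and $T=|E|\cdot\frac{1+\tau\epsilon^2}{n}$, and outputs YES if $Z<T$ and NO otherwise. It is an $\epsilon$-uniformity tester (for domain $[n]$) if, when $P=U_n$, it outputs YES with probability at least $3/4$, and for every $P\in\Delta([n])$ with $\|P-U_n\|\ge\epsilon$ it outputs NO with probability at least $3/4$. $c(G)$ denotes the number of ordered triples $(u,v,w)$ of distinct vertices with $\{u,v\}\in E$ and $\{v,w\}\in E$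 (equivalently $c(G)=\sum_{v\in V}d_v(d_v-1)$, $d_v$ the degree of $v$). *)

theory Defs
  imports Complex_Main "HOL-Library.FuncSet"
begin

definition is_distrib :: "nat \<Rightarrow> (nat \<Rightarrow> real) \<Rightarrow> bool" where
  "is_distrib n P \<longleftrightarrow> (\<forall>i\<in>{1..n}. P i \<ge> 0) \<and> (\<Sum>i=1..n. P i) = 1"

definition unif :: "nat \<Rightarrow> nat \<Rightarrow> real" where
  "unif n = (\<lambda>i. 1 / real n)"

definition l1dist :: "nat \<Rightarrow> (nat \<Rightarrow> real) \<Rightarrow> (nat \<Rightarrow> real) \<Rightarrow> real" where
  "l1dist n P Q = (\<Sum>i=1..n. \<bar>P i - Q i\<bar>)"

definition comparison_graph :: "'a set \<Rightarrow> 'a set set \<Rightarrow> bool" where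
  "comparison_graph V E \<longleftrightarrow> finite V \<and> E \<subseteq> {{u, v} | u v. u \<in> V \<and> v \<in> V \<and> u \<noteq> v}"

definition cG :: "'a set \<Rightarrow> 'a set set \<Rightarrow> nat" where
  "cG V E = card {(u, v, w). u \<in> V \<and> v \<in> V \<and> w \<in> V \<and> u \<noteq> v \<and> v \<noteq> w \<and> u \<noteq> w
                     \<and> {u, v} \<in> E \<and> {v, w} \<in> E}"

definition collisions :: "'a set set \<Rightarrow> ('a \<Rightarrow> nat) \<Rightarrow> nat" where
  "collisions E S = card {e \<in> E. \<exists>u v. e = {u, v} \<and> u \<noteq> v \<and> S u = S v}"

text \<open>Probability of an event on the i.i.d. samples S(v) ~ P, v in V (product distribution).\<close>
definition prob_samples :: "nat \<Rightarrow> 'a set \<Rightarrow> (nat \<Rightarrow> real) \<Rightarrow> (('a \<Rightarrow> nat) \<Rightarrow> bool) \<Rightarrow> real" where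
  "prob_samples n V P A =
     (\<Sum>S\<in>PiE V (\<lambda>_. {1..n}). (\<Prod>v\<in>V. P (S v)) * (if A S then 1 else 0))"

definition outputs_yes :: "nat \<Rightarrow> real \<Rightarrow> 'a set set \<Rightarrow> real \<Rightarrow> ('a \<Rightarrow> nat) \<Rightarrow> bool" where
  "outputs_yes n \<epsilon> E \<tau> S \<longleftrightarrow>
     real (collisions E S) < real (card E) * (1 + \<tau> * \<epsilon>^2) / real n"

definition is_uniformity_tester :: "nat \<Rightarrow> real \<Rightarrow> 'a set \<Rightarrow> 'a set set \<Rightarrow> real \<Rightarrow> bool" where
  "is_uniformity_tester n \<epsilon> V E \<tau> \<longleftrightarrow>
     prob_samples n V (unif n) (outputs_yes n \<epsilon> E \<tau>) \<ge> 3/4 \<and>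
     (\<forall>P. is_distrib n P \<and> l1dist n P (unif n) \<ge> \<epsilon> \<longrightarrow>
        prob_samples n V P (\<lambda>S. \<not> outputs_yes n \<epsilon> E \<tau> S) \<ge> 3/4)"

end

theory Submission
  imports Defs "HOL-Analysis.Convex"
begin

(* For i.i.d. samples from P an edge collides with probability
   |P|_2^2, and the indicators of two edges are independent unless the edges share a vertex, so
   E Z = |E| |P|_2^2 and Var Z = |E| (|P|_2^2 - |P|_2^4) + c(G) (|P|_3^3 - |P|_2^4).
   Writing P = U + x and d = |x|_2^2, one has |P|_2^2 = 1/n + d, and an eps-far P has
   d >= eps^2/n by Cauchy-Schwarz. Hence the threshold |E| (1 + tau eps^2)/n lies |E| tau eps^2/n
   above the mean for U and at least |E| (1 - tau) d below it for a far P, and Chebyshev's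
   inequality together with hypotheses (1)-(3) bounds both error probabilities by 1/4; in the far
   case the cubic term is controlled by sum x_i^3 <= d^(3/2). *)

definition expect_samples :: "nat \<Rightarrow> 'a set \<Rightarrow> (nat \<Rightarrow> real) \<Rightarrow> (('a \<Rightarrow> nat) \<Rightarrow> real) \<Rightarrow> real" where
  "expect_samples n V P f = (\<Sum>S\<in>PiE V (\<lambda>_. {1..n}). (\<Prod>v\<in>V. P (S v)) * f S)"

lemma prob_samples_eq_expect: "prob_samples n V P A = expect_samples n V P (\<lambda>S. of_bool (A S))"
  unfolding prob_samples_def expect_samples_def by (simp add: of_bool_def)

lemma expect_samples_add:
  "expect_samples n V P (\<lambda>S. f S + g S) = expect_samples n V P f + expect_samples n V P g"
  unfolding expect_samples_def by (simp add: distrib_left sum.distrib)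

lemma expect_samples_diff:
  "expect_samples n V P (\<lambda>S. f S - g S) = expect_samples n V P f - expect_samples n V P g"
  unfolding expect_samples_def by (simp add: right_diff_distrib sum_subtractf)

lemma expect_samples_cmult: "expect_samples n V P (\<lambda>S. c * f S) = c * expect_samples n V P f"
  unfolding expect_samples_def by (simp add: sum_distrib_left mult_ac)

lemma expect_samples_sum:
  "expect_samples n V P (\<lambda>S. \<Sum>e\<in>E. f e S) = (\<Sum>e\<in>E. expect_samples n V P (f e))"
  unfolding expect_samples_def by (simp add: sum_distrib_left sum.swap[of _ E])

lemma expect_samples_cong:
  "(\<And>S. S \<in> PiE V (\<lambda>_. {1..n}) \<Longrightarrow> f S = g S) \<Longrightarrow> expect_samples n V P f = expect_samples n V P g"
  unfolding expect_samples_def by (auto intro: sum.cong)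

lemma expect_samples_mono:
  assumes "\<And>i. i \<in> {1..n} \<Longrightarrow> P i \<ge> 0"
    and "\<And>S. S \<in> PiE V (\<lambda>_. {1..n}) \<Longrightarrow> f S \<le> g S"
  shows "expect_samples n V P f \<le> expect_samples n V P g"
  unfolding expect_samples_def
proof (intro sum_mono mult_left_mono)
  fix S assume "S \<in> PiE V (\<lambda>_. {1..n})"
  then show "f S \<le> g S" "0 \<le> (\<Prod>v\<in>V. P (S v))"
    using assms by (auto intro!: prod_nonneg simp: PiE_def Pi_def)
qed

text \<open>The only place where independence of the samples is used.\<close>
lemma expect_samples_prod:
  assumes "finite V"
  shows "expect_samples n V P (\<lambda>S. \<Prod>v\<in>V. h v (S v)) = (\<Prod>v\<in>V. \<Sum>c\<in>{1..n}. P c * h v c)"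
  unfolding expect_samples_def by (subst prod_sum_PiE) (auto simp: assms prod.distrib)

lemma expect_samples_const:
  assumes "finite V" and "(\<Sum>i=1..n. P i) = 1"
  shows "expect_samples n V P (\<lambda>S. c) = c"
  using expect_samples_prod[OF assms(1), of n P "\<lambda>_ _. 1"] expect_samples_cmult[of n V P c "\<lambda>_. 1"] assms(2)
  by simp

lemma prob_samples_not:
  assumes "finite V" and "(\<Sum>i=1..n. P i) = 1"
  shows "prob_samples n V P (\<lambda>S. \<not> A S) = 1 - prob_samples n V P A"
proof -
  have "prob_samples n V P (\<lambda>S. \<not> A S) = expect_samples n V P (\<lambda>S. 1 - of_bool (A S))"
    unfolding prob_samples_eq_expect by (rule expect_samples_cong) simp
  then show ?thesis
    by (simp only: expect_samples_diff expect_samples_const[OF assms] prob_samples_eq_expect)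
qed

lemma prob_samples_chebyshev:
  assumes "\<And>i. i \<in> {1..n} \<Longrightarrow> P i \<ge> 0" and "t > 0"
    and "\<And>S. S \<in> PiE V (\<lambda>_. {1..n}) \<Longrightarrow> A S \<Longrightarrow> t \<le> \<bar>f S - \<mu>\<bar>"
  shows "prob_samples n V P A \<le> expect_samples n V P (\<lambda>S. (f S - \<mu>)^2) / t^2"
proof -
  have "prob_samples n V P A \<le> expect_samples n V P (\<lambda>S. (f S - \<mu>)^2 / t^2)"
    unfolding prob_samples_eq_expect
  proof (rule expect_samples_mono[OF assms(1)])
    fix S assume "S \<in> PiE V (\<lambda>_. {1..n})"
    then have "A S \<Longrightarrow> t^2 \<le> (f S - \<mu>)^2"
      using assms(2,3) by (metis abs_le_square_iff abs_of_pos)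
    then show "of_bool (A S) \<le> (f S - \<mu>)^2 / t^2"
      using assms(2) by auto
  qed
  then show ?thesis
    using expect_samples_cmult[of n V P "1 / t^2"] by simp
qed

definition collision_ind :: "'a set \<Rightarrow> ('a \<Rightarrow> nat) \<Rightarrow> real" where
  "collision_ind e S = of_bool (\<exists>u v. e = {u, v} \<and> u \<noteq> v \<and> S u = S v)"

lemma collisions_eq_sum_collision_ind:
  "finite E \<Longrightarrow> real (collisions E S) = (\<Sum>e\<in>E. collision_ind e S)"
  unfolding collisions_def collision_ind_def by (simp add: sum_of_bool_eq Int_def)

lemma collision_ind_doubleton: "u \<noteq> v \<Longrightarrow> collision_ind {u, v} S = of_bool (S u = S v)"
  unfolding collision_ind_def by (auto simp: doubleton_eq_iff)

lemma prod_of_bool: "finite A \<Longrightarrow> (\<Prod>x\<in>A. of_bool (Q x) :: real) = of_bool (\<forall>x\<in>A. Q x)"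
  by (induction A rule: finite_induct) auto

text \<open>Writing the collision indicator as a sum, over the common value, of products of
  single-sample factors makes the moments of collision indicators computable by independence.\<close>
lemma collision_ind_eq_sum_prod:
  assumes "finite V" "{u, v} \<subseteq> V" "u \<noteq> v" "S u \<in> {1..n}"
  shows "collision_ind {u, v} S = (\<Sum>a\<in>{1..n}. \<Prod>x\<in>V. of_bool (x \<in> {u, v} \<longrightarrow> S x = a))"
proof -
  have "(\<Prod>x\<in>V. of_bool (x \<in> {u, v} \<longrightarrow> S x = a)) = (of_bool (S u = a \<and> S v = a) :: real)" for a
    using assms(1,2) by (subst prod_of_bool) auto
  moreover have "(\<Sum>a\<in>{1..n}. of_bool (S u = a \<and> S v = a) :: real) = of_bool (S u = S v)"
    using assms(4) by (cases "S u = S v") (auto intro: sum.neutral)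
  ultimately show ?thesis
    using assms(3) by (simp add: collision_ind_doubleton)
qed

lemma collision_ind_mult_eq_sum_prod:
  assumes "finite V" "e \<subseteq> V" "e = {u, v}" "u \<noteq> v" "f \<subseteq> V" "f = {u', v'}" "u' \<noteq> v'"
    and "S \<in> PiE V (\<lambda>_. {1..n})"
  shows "collision_ind e S * collision_ind f S =
    (\<Sum>a\<in>{1..n}. \<Sum>b\<in>{1..n}. \<Prod>x\<in>V. of_bool (x \<in> e \<longrightarrow> S x = a) * of_bool (x \<in> f \<longrightarrow> S x = b))"
proof -
  have "S u \<in> {1..n}" "S u' \<in> {1..n}"
    using assms(2,3,5,6,8) by auto
  then show ?thesis
    using assms collision_ind_eq_sum_prod[of V u v S n] collision_ind_eq_sum_prod[of V u' v' S n]
    by (simp add: sum_product prod.distrib)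
qed

lemma prod_if_mem_eq_power:
  assumes "finite V" "D \<subseteq> V"
  shows "(\<Prod>x\<in>V. if x \<in> D then c else 1) = c ^ card D"
  using assms by (simp add: prod.If_cases Int_absorb1)

lemma sum_pmf_mult_constraints:
  fixes P :: "nat \<Rightarrow> real"
  assumes "a \<in> {1..n}" "b \<in> {1..n}" "(\<Sum>i=1..n. P i) = 1"
  shows "(\<Sum>c\<in>{1..n}. P c * (of_bool (x \<in> e \<longrightarrow> c = a) * of_bool (x \<in> f \<longrightarrow> c = b))) =
    (if x \<in> e \<inter> f then of_bool (a = b) * P a else 1) * (if x \<in> e - f then P a else 1) *
    (if x \<in> f - e then P b else 1)"
proof -
  have "(\<Sum>c\<in>{1..n}. P c * (of_bool (x \<in> e \<longrightarrow> c = a) * of_bool (x \<in> f \<longrightarrow> c = b))) =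
      sum P ({1..n} \<inter> {c. (x \<in> e \<longrightarrow> c = a) \<and> (x \<in> f \<longrightarrow> c = b)})"
    by (simp add: sum_mult_of_bool_eq flip: of_bool_conj)
  moreover have "{1..n} \<inter> {c. (x \<in> e \<longrightarrow> c = a) \<and> (x \<in> f \<longrightarrow> c = b)} =
      (if x \<in> e \<and> x \<in> f then (if a = b then {a} else {}) else if x \<in> e then {a}
       else if x \<in> f then {b} else {1..n})"
    using assms(1,2) by auto
  ultimately show ?thesis
    using assms(3) by simp
qed

lemma expect_collision_ind_mult:
  assumes "finite V" "e \<subseteq> V" "e = {u, v}" "u \<noteq> v" "f \<subseteq> V" "f = {u', v'}" "u' \<noteq> v'"
    and "(\<Sum>i=1..n. P i) = 1"
  shows "expect_samples n V P (\<lambda>S. collision_ind e S * collision_ind f S) =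
    (\<Sum>a\<in>{1..n}. \<Sum>b\<in>{1..n}. (of_bool (a = b) * P a) ^ card (e \<inter> f) * P a ^ card (e - f) * P b ^ card (f - e))"
proof -
  have "expect_samples n V P (\<lambda>S. collision_ind e S * collision_ind f S) =
      expect_samples n V P (\<lambda>S. \<Sum>a\<in>{1..n}. \<Sum>b\<in>{1..n}. \<Prod>x\<in>V.
         of_bool (x \<in> e \<longrightarrow> S x = a) * of_bool (x \<in> f \<longrightarrow> S x = b))"
    by (rule expect_samples_cong) (rule collision_ind_mult_eq_sum_prod[OF assms(1-7)])
  also have "\<dots> = (\<Sum>a\<in>{1..n}. \<Sum>b\<in>{1..n}. \<Prod>x\<in>V. \<Sum>c\<in>{1..n}.
         P c * (of_bool (x \<in> e \<longrightarrow> c = a) * of_bool (x \<in> f \<longrightarrow> c = b)))"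
    unfolding expect_samples_sum
    by (intro sum.cong refl expect_samples_prod[OF assms(1), where
          h = "\<lambda>x c. of_bool (x \<in> e \<longrightarrow> c = _) * of_bool (x \<in> f \<longrightarrow> c = _)"])
  also have "\<dots> = (\<Sum>a\<in>{1..n}. \<Sum>b\<in>{1..n}.
      (of_bool (a = b) * P a) ^ card (e \<inter> f) * P a ^ card (e - f) * P b ^ card (f - e))"
  proof (intro sum.cong refl)
    fix a b assume ab: "a \<in> {1..n}" "b \<in> {1..n}"
    have "(\<Prod>x\<in>V. \<Sum>c\<in>{1..n}. P c * (of_bool (x \<in> e \<longrightarrow> c = a) * of_bool (x \<in> f \<longrightarrow> c = b))) =
        (\<Prod>x\<in>V. (if x \<in> e \<inter> f then of_bool (a = b) * P a else 1) * (if x \<in> e - f then P a else 1) *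
          (if x \<in> f - e then P b else 1))"
      by (rule prod.cong[OF refl], rule sum_pmf_mult_constraints[OF ab assms(8)])
    also have "\<dots> = (of_bool (a = b) * P a) ^ card (e \<inter> f) * P a ^ card (e - f) * P b ^ card (f - e)"
      unfolding prod.distrib using assms(2,5) by (subst (1 2 3) prod_if_mem_eq_power[OF assms(1)]) auto
    finally show "(\<Prod>x\<in>V. \<Sum>c\<in>{1..n}. P c * (of_bool (x \<in> e \<longrightarrow> c = a) * of_bool (x \<in> f \<longrightarrow> c = b))) =
        (of_bool (a = b) * P a) ^ card (e \<inter> f) * P a ^ card (e - f) * P b ^ card (f - e)" .
  qed
  finally show ?thesis .
qed

lemma comparison_graph_edgeE:
  assumes "comparison_graph V E" "e \<in> E"
  obtains u v where "e = {u, v}" "u \<noteq> v" "u \<in> V" "v \<in> V"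
  using assms unfolding comparison_graph_def by blast

lemma comparison_graph_finite:
  assumes "comparison_graph V E"
  shows "finite V" "finite E"
proof -
  show "finite V" using assms unfolding comparison_graph_def by blast
  moreover have "E \<subseteq> Pow V" using assms unfolding comparison_graph_def by blast
  ultimately show "finite E" by (meson finite_Pow_iff finite_subset)
qed

lemma card_Int_eq_one_if_card_two:
  assumes "card e = 2" "card f = 2" "e \<noteq> f" "e \<inter> f \<noteq> {}"
  shows "card (e \<inter> f) = 1"
proof -
  have "finite e" "finite f" using assms(1,2) card.infinite by fastforce+
  then have "card (e \<inter> f) \<noteq> 0" "card (e \<inter> f) \<le> 2"
    using assms card_mono[of e "e \<inter> f"] by auto
  moreover have "card (e \<inter> f) \<noteq> 2"
    using assms \<open>finite e\<close> \<open>finite f\<close> card_subset_eq[of e "e \<inter> f"] card_subset_eq[of f "e \<inter> f"] by auto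
  ultimately show ?thesis by linarith
qed

lemma expect_collision_ind_mult_edges:
  assumes G: "comparison_graph V E" and "e \<in> E" "f \<in> E" and P: "(\<Sum>i=1..n. P i) = 1"
  shows "expect_samples n V P (\<lambda>S. collision_ind e S * collision_ind f S) =
    (if e = f then (\<Sum>a=1..n. P a ^ 2) else if e \<inter> f \<noteq> {} then (\<Sum>a=1..n. P a ^ 3)
     else (\<Sum>a=1..n. P a ^ 2)^2)"
proof -
  obtain u v where e: "e = {u, v}" "u \<noteq> v" "u \<in> V" "v \<in> V"
    using comparison_graph_edgeE[OF G \<open>e \<in> E\<close>] .
  obtain u' v' where f: "f = {u', v'}" "u' \<noteq> v'" "u' \<in> V" "v' \<in> V"
    using comparison_graph_edgeE[OF G \<open>f \<in> E\<close>] .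
  have card2: "card e = 2" "card f = 2" and "finite e"
    using e f by auto
  then have card_Diff: "card (e - f) = 2 - card (e \<inter> f)" "card (f - e) = 2 - card (e \<inter> f)"
    using card_Diff_subset_Int[of e f] card_Diff_subset_Int[of f e] by (auto simp: Int_commute)
  have moment: "expect_samples n V P (\<lambda>S. collision_ind e S * collision_ind f S) =
      (\<Sum>a\<in>{1..n}. \<Sum>b\<in>{1..n}. (of_bool (a = b) * P a) ^ card (e \<inter> f) *
         P a ^ card (e - f) * P b ^ card (f - e))"
    by (rule expect_collision_ind_mult[OF comparison_graph_finite(1)[OF G] _ e(1,2) _ f(1,2) P])
      (use e f in auto)
  consider "e = f" | "e \<noteq> f" "e \<inter> f \<noteq> {}" | "e \<inter> f = {}"
    by blast
  then show ?thesis
  proof cases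
    case 1
    have "(of_bool (a = b) * P a) ^ 2 = (if a = b then P a ^ 2 else 0)" for a b
      by simp
    with 1 show ?thesis using moment card_Diff card2 by simp
  next
    case 2
    have "of_bool (a = b) * P a * P a * P b = (if a = b then P a ^ 3 else 0)" for a b
      by (simp add: power3_eq_cube)
    with 2 show ?thesis using moment card_Diff card_Int_eq_one_if_card_two[OF card2 2] by simp
  next
    case 3
    then show ?thesis using moment card_Diff
      by (auto simp: power2_eq_square sum_product)
  qed
qed

lemma inj_on_path_edges:
  "inj_on (\<lambda>(u, v, w). ({u, v}, {v, w})) {(u, v, w). u \<noteq> v \<and> v \<noteq> w \<and> u \<noteq> w}"
proof (rule inj_onI)
  fix x y
  assume "x \<in> {(u, v, w). u \<noteq> v \<and> v \<noteq> w \<and> u \<noteq> w}" "y \<in> {(u, v, w). u \<noteq> v \<and> v \<noteq> w \<and> u \<noteq> w}"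
    and eq: "(\<lambda>(u, v, w). ({u, v}, {v, w})) x = (\<lambda>(u, v, w). ({u, v}, {v, w})) y"
  then obtain u v w u' v' w' where xy: "x = (u, v, w)" "y = (u', v', w')"
    and distinct: "u \<noteq> v" "v \<noteq> w" "u \<noteq> w" "u' \<noteq> v'" "v' \<noteq> w'" "u' \<noteq> w'"
    by auto
  have edges: "{u, v} = {u', v'}" "{v, w} = {v', w'}"
    using eq xy by auto
  have "{v} = {u', v'} \<inter> {v', w'}"
    using distinct by (auto simp flip: edges)
  then have "v = v'"
    using distinct by auto
  then show "x = y"
    using edges distinct xy by (auto simp: doubleton_eq_iff)
qed

lemma card_intersecting_edge_pairs:
  assumes G: "comparison_graph V E"
  shows "card {(e, f). e \<in> E \<and> f \<in> E \<and> e \<noteq> f \<and> e \<inter> f \<noteq> {}} = cG V E"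
proof -
  let ?T = "{(u, v, w). u \<in> V \<and> v \<in> V \<and> w \<in> V \<and> u \<noteq> v \<and> v \<noteq> w \<and> u \<noteq> w
                     \<and> {u, v} \<in> E \<and> {v, w} \<in> E}"
  let ?Q = "{(e, f). e \<in> E \<and> f \<in> E \<and> e \<noteq> f \<and> e \<inter> f \<noteq> {}}"
  let ?\<phi> = "\<lambda>(u, v, w). ({u, v}, {v, w})"
  have "inj_on ?\<phi> ?T"
    by (rule inj_on_subset[OF inj_on_path_edges]) blast
  moreover have "?Q \<subseteq> ?\<phi> ` ?T"
  proof clarify
    fix e f assume "e \<in> E" "f \<in> E" "e \<noteq> f" "e \<inter> f \<noteq> {}"
    then obtain v where v: "v \<in> e" "v \<in> f" by blast
    obtain u where u: "e = {u, v}" "u \<noteq> v" "u \<in> V" "v \<in> V"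
      using comparison_graph_edgeE[OF G \<open>e \<in> E\<close>] v(1) by (auto simp: insert_commute)
    obtain w where w: "f = {v, w}" "w \<noteq> v" "w \<in> V"
      using comparison_graph_edgeE[OF G \<open>f \<in> E\<close>] v(2) by auto
    have "(u, v, w) \<in> ?T"
      using u w \<open>e \<in> E\<close> \<open>f \<in> E\<close> \<open>e \<noteq> f\<close> by auto
    moreover have "(e, f) = ?\<phi> (u, v, w)"
      using u w by simp
    ultimately show "(e, f) \<in> ?\<phi> ` ?T"
      by blast
  qed
  moreover have "?\<phi> ` ?T \<subseteq> ?Q"
    by (auto simp: doubleton_eq_iff)
  ultimately have "bij_betw ?\<phi> ?T ?Q"
    unfolding bij_betw_def by blast
  then show ?thesis
    unfolding cG_def by (simp add: bij_betw_same_card)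
qed

lemma sum_of_bool_intersecting_edges:
  assumes G: "comparison_graph V E"
  shows "(\<Sum>e\<in>E. \<Sum>f\<in>E. of_bool (e \<noteq> f \<and> e \<inter> f \<noteq> {}) :: real) = real (cG V E)"
proof -
  have fin: "finite E"
    using comparison_graph_finite[OF G] by blast
  have "(\<Sum>e\<in>E. \<Sum>f\<in>E. of_bool (e \<noteq> f \<and> e \<inter> f \<noteq> {}) :: real) =
      (\<Sum>p\<in>E \<times> E. of_bool (fst p \<noteq> snd p \<and> fst p \<inter> snd p \<noteq> {}))"
    by (simp add: sum.cartesian_product split_beta)
  also have "\<dots> = real (card ((E \<times> E) \<inter> {p. fst p \<noteq> snd p \<and> fst p \<inter> snd p \<noteq> {}}))"
    using fin by simp
  also have "(E \<times> E) \<inter> {p. fst p \<noteq> snd p \<and> fst p \<inter> snd p \<noteq> {}} =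
      {(e, f). e \<in> E \<and> f \<in> E \<and> e \<noteq> f \<and> e \<inter> f \<noteq> {}}"
    by auto
  finally show ?thesis
    by (simp add: card_intersecting_edge_pairs[OF G])
qed

lemma expect_collisions:
  assumes G: "comparison_graph V E" and P: "(\<Sum>i=1..n. P i) = 1"
  shows "expect_samples n V P (\<lambda>S. real (collisions E S)) = real (card E) * (\<Sum>a=1..n. P a ^ 2)"
proof -
  have "expect_samples n V P (\<lambda>S. real (collisions E S)) =
      expect_samples n V P (\<lambda>S. \<Sum>e\<in>E. collision_ind e S * collision_ind e S)"
    by (rule expect_samples_cong)
      (simp add: collisions_eq_sum_collision_ind comparison_graph_finite[OF G] collision_ind_def)
  then show ?thesis
    by (simp add: expect_samples_sum expect_collision_ind_mult_edges[OF G _ _ P])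
qed

lemma expect_collisions_sq:
  assumes G: "comparison_graph V E" and P: "(\<Sum>i=1..n. P i) = 1"
  defines "p2 \<equiv> \<Sum>a=1..n. P a ^ 2" and "p3 \<equiv> \<Sum>a=1..n. P a ^ 3"
  shows "expect_samples n V P (\<lambda>S. real (collisions E S) ^ 2) =
    real (card E) ^ 2 * p2 ^ 2 + real (card E) * (p2 - p2 ^ 2) + real (cG V E) * (p3 - p2 ^ 2)"
proof -
  let ?adj = "\<lambda>e f. of_bool (e \<noteq> f \<and> e \<inter> f \<noteq> {}) :: real"
  have fin: "finite E"
    using comparison_graph_finite[OF G] by blast
  have "expect_samples n V P (\<lambda>S. real (collisions E S) ^ 2) =
      (\<Sum>e\<in>E. \<Sum>f\<in>E. expect_samples n V P (\<lambda>S. collision_ind e S * collision_ind f S))"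
    by (simp add: collisions_eq_sum_collision_ind fin power2_eq_square sum_product expect_samples_sum)
  also have "\<dots> = (\<Sum>e\<in>E. \<Sum>f\<in>E. p2 ^ 2 + of_bool (e = f) * (p2 - p2 ^ 2) + ?adj e f * (p3 - p2 ^ 2))"
    by (intro sum.cong refl) (auto simp: expect_collision_ind_mult_edges[OF G _ _ P] p2_def p3_def)
  also have "\<dots> = real (card E) ^ 2 * p2 ^ 2 + real (card E) * (p2 - p2 ^ 2) +
      (\<Sum>e\<in>E. \<Sum>f\<in>E. ?adj e f) * (p3 - p2 ^ 2)"
    by (simp add: sum.distrib sum_distrib_right fin power2_eq_square) (simp add: algebra_simps)
  also have "(\<Sum>e\<in>E. \<Sum>f\<in>E. ?adj e f) = real (cG V E)"
    by (rule sum_of_bool_intersecting_edges[OF G])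
  finally show ?thesis .
qed

lemma expect_collisions_centered_sq:
  assumes G: "comparison_graph V E" and P: "(\<Sum>i=1..n. P i) = 1"
  defines "p2 \<equiv> \<Sum>a=1..n. P a ^ 2" and "p3 \<equiv> \<Sum>a=1..n. P a ^ 3"
  shows "expect_samples n V P (\<lambda>S. (real (collisions E S) - real (card E) * p2) ^ 2) =
    real (card E) * (p2 - p2 ^ 2) + real (cG V E) * (p3 - p2 ^ 2)"
proof -
  let ?Z = "\<lambda>S. real (collisions E S)" and ?\<mu> = "real (card E) * p2"
  have "expect_samples n V P (\<lambda>S. (?Z S - ?\<mu>) ^ 2) =
      expect_samples n V P (\<lambda>S. ?Z S ^ 2 + (- 2 * ?\<mu>) * ?Z S + ?\<mu> ^ 2)"
    by (rule expect_samples_cong) (simp add: power2_eq_square algebra_simps)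
  also have "\<dots> = expect_samples n V P (\<lambda>S. ?Z S ^ 2) - 2 * ?\<mu> * expect_samples n V P ?Z + ?\<mu> ^ 2"
    by (simp only: expect_samples_add expect_samples_cmult
        expect_samples_const[OF comparison_graph_finite(1)[OF G] P])
  also have "\<dots> = real (card E) ^ 2 * p2 ^ 2 + real (card E) * (p2 - p2 ^ 2) + real (cG V E) * (p3 - p2 ^ 2)
      - 2 * ?\<mu> * ?\<mu> + ?\<mu> ^ 2"
    unfolding p2_def p3_def expect_collisions_sq[OF G P] expect_collisions[OF G P] ..
  finally show ?thesis
    by (simp add: power2_eq_square algebra_simps)
qed

lemma sum_power2_shift:
  fixes x :: "'b \<Rightarrow> real"
  assumes "(\<Sum>i\<in>I. x i) = 0"
  shows "(\<Sum>i\<in>I. (x i + a)^2) = (\<Sum>i\<in>I. x i ^ 2) + real (card I) * a^2"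
proof -
  have "(\<Sum>i\<in>I. (x i + a)^2) = (\<Sum>i\<in>I. x i ^ 2 + (2 * a) * x i + a^2)"
    by (simp add: power2_eq_square algebra_simps)
  also have "\<dots> = (\<Sum>i\<in>I. x i ^ 2) + (2 * a) * (\<Sum>i\<in>I. x i) + real (card I) * a^2"
    by (simp add: sum.distrib sum_distrib_left)
  finally show ?thesis
    using assms by simp
qed

lemma sum_power3_shift:
  fixes x :: "'b \<Rightarrow> real"
  assumes "(\<Sum>i\<in>I. x i) = 0"
  shows "(\<Sum>i\<in>I. (x i + a)^3) = (\<Sum>i\<in>I. x i ^ 3) + 3 * a * (\<Sum>i\<in>I. x i ^ 2) + real (card I) * a^3"
proof -
  have "(\<Sum>i\<in>I. (x i + a)^3) = (\<Sum>i\<in>I. x i ^ 3 + (3 * a) * x i ^ 2 + (3 * a^2) * x i + a^3)"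
    by (simp add: power2_eq_square power3_eq_cube algebra_simps)
  also have "\<dots> = (\<Sum>i\<in>I. x i ^ 3) + (3 * a) * (\<Sum>i\<in>I. x i ^ 2) + (3 * a^2) * (\<Sum>i\<in>I. x i)
      + real (card I) * a^3"
    by (simp add: sum.distrib sum_distrib_left)
  finally show ?thesis
    using assms by simp
qed

lemma sum_power3_le:
  fixes x :: "'b \<Rightarrow> real"
  assumes "finite I"
  shows "(\<Sum>i\<in>I. x i ^ 3) \<le> sqrt (\<Sum>i\<in>I. x i ^ 2) * (\<Sum>i\<in>I. x i ^ 2)"
proof -
  have "x i ^ 3 \<le> sqrt (\<Sum>i\<in>I. x i ^ 2) * x i ^ 2" if "i \<in> I" for i
  proof -
    have "x i ^ 2 \<le> (\<Sum>i\<in>I. x i ^ 2)"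
      using assms that by (intro member_le_sum) auto
    then have "\<bar>x i\<bar> \<le> sqrt (\<Sum>i\<in>I. x i ^ 2)"
      using real_sqrt_le_mono by fastforce
    then have "\<bar>x i\<bar> * x i ^ 2 \<le> sqrt (\<Sum>i\<in>I. x i ^ 2) * x i ^ 2"
      by (rule mult_right_mono) simp
    moreover have "x i ^ 3 \<le> \<bar>x i\<bar> * x i ^ 2"
      using mult_right_mono[OF abs_ge_self, of "x i ^ 2" "x i"] by (simp add: power3_eq_cube power2_eq_square mult.assoc)
    ultimately show ?thesis
      by linarith
  qed
  then have "(\<Sum>i\<in>I. x i ^ 3) \<le> (\<Sum>i\<in>I. sqrt (\<Sum>i\<in>I. x i ^ 2) * x i ^ 2)"
    by (rule sum_mono)
  then show ?thesis
    by (simp add: sum_distrib_left)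
qed

lemma sum_abs_power2_le:
  fixes x :: "'b \<Rightarrow> real"
  shows "(\<Sum>i\<in>I. \<bar>x i\<bar>)^2 \<le> real (card I) * (\<Sum>i\<in>I. x i ^ 2)"
  using Cauchy_Schwarz_ineq_sum[of "\<lambda>i. \<bar>x i\<bar>" "\<lambda>_. 1" I] by (simp add: mult.commute)

definition l2dist_sq :: "nat \<Rightarrow> (nat \<Rightarrow> real) \<Rightarrow> (nat \<Rightarrow> real) \<Rightarrow> real" where
  "l2dist_sq n P Q = (\<Sum>i=1..n. (P i - Q i)^2)"

lemma l1dist_power2_le: "l1dist n P Q ^ 2 \<le> real n * l2dist_sq n P Q"
  unfolding l1dist_def l2dist_sq_def using sum_abs_power2_le[of "\<lambda>i. P i - Q i" "{1..n}"] by simp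

lemma l2dist_sq_ge_if_l1dist_ge:
  assumes "n \<ge> 1" and "0 \<le> \<epsilon>" and "\<epsilon> \<le> l1dist n P Q"
  shows "\<epsilon>^2 / n \<le> l2dist_sq n P Q"
proof -
  have "\<epsilon>^2 \<le> real n * l2dist_sq n P Q"
    using l1dist_power2_le[of n P Q] power_mono[OF assms(3,2), of 2] by linarith
  then show ?thesis
    using assms(1) by (simp add: divide_le_eq mult.commute)
qed

lemma pmf_power_sums:
  assumes n: "n \<ge> 1" and P: "(\<Sum>i=1..n. P i) = 1"
  defines "d \<equiv> l2dist_sq n P (unif n)"
  shows "(\<Sum>a=1..n. P a ^ 2) = 1 / n + d"
    and "(\<Sum>a=1..n. P a ^ 3) = (1 / n)^2 + 3 * d / n + (\<Sum>i=1..n. (P i - 1 / n)^3)"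
proof -
  have centered: "(\<Sum>i=1..n. P i - 1 / n) = 0"
    using P n by (simp add: sum_subtractf)
  have d_eq: "d = (\<Sum>i=1..n. (P i - 1 / n)^2)"
    unfolding d_def l2dist_sq_def unif_def ..
  show "(\<Sum>a=1..n. P a ^ 2) = 1 / n + d"
    using sum_power2_shift[OF centered, of "1 / n"] n by (simp add: d_eq power2_eq_square)
  show "(\<Sum>a=1..n. P a ^ 3) = (1 / n)^2 + 3 * d / n + (\<Sum>i=1..n. (P i - 1 / n)^3)"
    using sum_power3_shift[OF centered, of "1 / n"] n by (simp add: d_eq power2_eq_square power3_eq_cube)
qed

lemma collision_edge_terms_le:
  fixes m n d e t :: real
  assumes n: "n \<ge> 1" and e: "0 < e" "e \<le> 1" and m: "m > 0"
    and mlarge: "16 * n \<le> m * (1 - t)^2 * e^4" and d: "e^2 / n \<le> d"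
  shows "m * (1 / n + d) \<le> m^2 * (1 - t)^2 * d^2 / 8"
proof -
  define A where "A = m * (1 - t)^2 / 16"
  have "A \<ge> 0" using m by (simp add: A_def)
  have one_le: "1 \<le> A * e^4 / n"
    using mlarge n unfolding A_def by (simp add: field_simps)
  have "e^4 \<le> e^2"
    using e by (simp add: power_decreasing)
  then have "A * e^4 / n \<le> A * (e^2 / n)"
    using \<open>A \<ge> 0\<close> n by (simp add: divide_right_mono mult_left_mono)
  also have "\<dots> \<le> A * d"
    using d \<open>A \<ge> 0\<close> by (rule mult_left_mono)
  finally have Ad: "1 \<le> A * d"
    using one_le by linarith
  have "(e^2 / n)^2 \<le> d^2"
    using d e n by (intro power_mono) auto
  then have "A * e^4 / n \<le> n * (A * d^2)"
    using \<open>A \<ge> 0\<close> n by (simp add: field_simps power2_eq_square power4_eq_xxxx mult_left_mono)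
  then have "1 \<le> n * (A * d^2)"
    using one_le by linarith
  then have "1 / n \<le> A * d^2"
    using n by (simp add: pos_divide_le_eq mult.commute)
  moreover have "0 < d"
    using d e n by (smt (verit) divide_pos_pos zero_less_power)
  ultimately have "m * (1 / n) + m * d \<le> m * (A * d^2) + m * d * (A * d)"
    using m mult_left_mono[OF Ad, of "m * d"] by (intro add_mono mult_left_mono) auto
  also have "\<dots> = m^2 * (1 - t)^2 * d^2 / 8"
    unfolding A_def by (simp add: power2_eq_square)
  finally show ?thesis
    by (simp add: distrib_left)
qed

lemma power2_div_sqrt_le_sqrt:
  fixes n d e :: real
  assumes "n \<ge> 1" and "0 < e" "e \<le> 1" and "e^2 / n \<le> d"
  shows "e^2 / sqrt n \<le> sqrt d"
proof -
  have "e^2 / sqrt n \<le> e / sqrt n"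
    using assms by (intro divide_right_mono) (auto simp: power2_eq_square mult_le_cancel_left1)
  also have "e / sqrt n = sqrt (e^2 / n)"
    using assms by (simp add: real_sqrt_divide)
  also have "\<dots> \<le> sqrt d"
    using assms by simp
  finally show ?thesis .
qed

lemma collision_pair_terms_le:
  fixes m n d e t c x3 :: real
  assumes n: "n \<ge> 1" and e: "0 < e" "e \<le> 1" and c: "0 \<le> c" "c \<le> m^2 * (1 - t)^2 * e^2 / (16 * sqrt n)"
    and d: "e^2 / n \<le> d" and x3: "x3 \<le> sqrt d * d"
  shows "c * (d / n + x3) \<le> m^2 * (1 - t)^2 * d^2 / 8"
proof -
  define B where "B = m^2 * (1 - t)^2 / 16"
  have "B \<ge> 0" by (simp add: B_def)
  have cB: "c \<le> B * (e^2 / sqrt n)"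
    using c(2) by (simp add: B_def)
  have "0 < d"
    using d e n by (smt (verit) divide_pos_pos zero_less_power)
  have sqrt_n: "1 \<le> sqrt n"
    using n by simp
  have "e^2 / sqrt n / n \<le> e^2 / n"
    using mult_right_mono[OF sqrt_n, of "e^2"] n by (simp add: field_simps)
  then have small1: "e^2 / sqrt n / n \<le> d"
    using d by linarith
  have small2: "e^2 / sqrt n \<le> sqrt d"
    by (rule power2_div_sqrt_le_sqrt[OF n e d])
  have "c * (d / n) \<le> B * (e^2 / sqrt n) * (d / n)"
    using cB \<open>0 < d\<close> n by (intro mult_right_mono) auto
  also have "\<dots> = B * d * (e^2 / sqrt n / n)"
    by simp
  also have "\<dots> \<le> B * d * d"
    using small1 \<open>B \<ge> 0\<close> \<open>0 < d\<close> by (intro mult_left_mono) auto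
  finally have pair1: "c * (d / n) \<le> B * d * d" .
  have "c * x3 \<le> c * (sqrt d * d)"
    using x3 c(1) by (rule mult_left_mono)
  also have "\<dots> \<le> B * (e^2 / sqrt n) * (sqrt d * d)"
    using cB \<open>0 < d\<close> by (intro mult_right_mono) auto
  also have "\<dots> \<le> B * sqrt d * (sqrt d * d)"
    using small2 \<open>B \<ge> 0\<close> \<open>0 < d\<close> by (intro mult_right_mono mult_left_mono) auto
  also have "\<dots> = B * d * d"
    using \<open>0 < d\<close> by (simp add: mult_ac)
  finally have pair2: "c * x3 \<le> B * d * d" .
  then have "c * (d / n + x3) \<le> 2 * (B * d * d)"
    using pair1 by (simp add: distrib_left)
  also have "2 * (B * d * d) = m^2 * (1 - t)^2 * d^2 / 8"
    by (simp add: B_def power2_eq_square)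
  finally show ?thesis .
qed

lemma collision_variance_far_le:
  fixes m n d e t c x3 :: real
  assumes n: "n \<ge> 1" and e: "0 < e" "e \<le> 1" and t: "0 < t" "t < 1" and m: "m > 0"
    and mlarge: "16 * n \<le> m * (1 - t)^2 * e^4"
    and c: "0 \<le> c" "c \<le> m^2 * (1 - t)^2 * e^2 / (16 * sqrt n)"
    and d: "e^2 / n \<le> d" and x3: "x3 \<le> sqrt d * d"
  shows "m * ((1 / n + d) - (1 / n + d)^2) + c * (d / n + x3 - d^2) \<le> (m * (d - t * e^2 / n))^2 / 4"
proof -
  have "0 \<le> (1 - t) * d"
    using t d e n by (smt (verit) divide_nonneg_pos mult_nonneg_nonneg zero_le_power)
  moreover have "(1 - t) * d \<le> d - t * e^2 / n"
    using mult_left_mono[OF d, of t] t by (simp add: algebra_simps)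
  ultimately have "(m * ((1 - t) * d))^2 \<le> (m * (d - t * e^2 / n))^2"
    using m by (intro power_mono mult_left_mono) auto
  moreover have "m * ((1 / n + d) - (1 / n + d)^2) + c * (d / n + x3 - d^2) \<le> m * (1 / n + d) + c * (d / n + x3)"
    using m c(1) by (simp add: algebra_simps)
  moreover have "m * (1 / n + d) \<le> m^2 * (1 - t)^2 * d^2 / 8"
    by (rule collision_edge_terms_le[OF n e m mlarge d])
  moreover have "c * (d / n + x3) \<le> m^2 * (1 - t)^2 * d^2 / 8"
    by (rule collision_pair_terms_le[OF n e c d x3])
  ultimately show ?thesis
    by (simp add: power_mult_distrib)
qed

lemma collision_variance_uniform_le:
  fixes m n e t :: real
  assumes n: "n \<ge> 1" and m: "m > 0" and mlarge: "4 * n \<le> m * t^2 * e^4"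
  shows "m * (1 / n - (1 / n)^2) \<le> (m * t * e^2 / n)^2 / 4"
proof -
  have "m * (1 / n - (1 / n)^2) \<le> m / n"
    using m n by (simp add: field_simps)
  also have "\<dots> = (m / n) * (4 * n) / (4 * n)"
    using n by simp
  also have "\<dots> \<le> (m / n) * (m * t^2 * e^4) / (4 * n)"
    using m n mlarge by (intro divide_right_mono mult_left_mono) auto
  also have "\<dots> = (m * t * e^2 / n)^2 / 4"
    by (simp add: power2_eq_square power4_eq_xxxx field_simps)
  finally show ?thesis .
qed

lemma expect_collisions_centered_sq_l2dist:
  assumes G: "comparison_graph V E" and n: "n \<ge> 1" and P: "(\<Sum>i=1..n. P i) = 1"
  defines "d \<equiv> l2dist_sq n P (unif n)" and "x3 \<equiv> \<Sum>i=1..n. (P i - 1 / n)^3"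
  shows "expect_samples n V P (\<lambda>S. (real (collisions E S) - real (card E) * (1 / n + d)) ^ 2) =
    real (card E) * ((1 / n + d) - (1 / n + d)^2) + real (cG V E) * (d / n + x3 - d^2)"
  using expect_collisions_centered_sq[OF G P, unfolded pmf_power_sums[OF n P, folded d_def x3_def]]
  by (simp add: power2_eq_square algebra_simps)

lemma uniform_accepted:
  assumes n: "n \<ge> 1" and "0 < \<epsilon>" "0 < \<tau>" and G: "comparison_graph V E"
    and large: "real (card E) \<ge> 4 * real n / (\<tau>^2 * \<epsilon>^4)"
  shows "prob_samples n V (unif n) (outputs_yes n \<epsilon> E \<tau>) \<ge> 3/4"
proof -
  let ?U = "unif n" and ?Z = "\<lambda>S. real (collisions E S)"
  define m where "m = real (card E)"
  define t where "t = m * \<tau> * \<epsilon>^2 / n"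
  have U: "(\<Sum>i=1..n. ?U i) = 1" "\<And>i. 0 \<le> ?U i"
    using n by (simp_all add: unif_def)
  have p2: "(\<Sum>a=1..n. ?U a ^ 2) = 1 / n" and p3: "(\<Sum>a=1..n. ?U a ^ 3) = (1 / n)^2"
    using n by (simp_all add: unif_def power2_eq_square power3_eq_cube)
  have mlarge: "4 * real n \<le> m * \<tau>^2 * \<epsilon>^4"
    using large \<open>0 < \<epsilon>\<close> \<open>0 < \<tau>\<close> by (simp add: m_def pos_divide_le_eq mult.assoc)
  have "0 < 4 * real n / (\<tau>^2 * \<epsilon>^4)"
    using n \<open>0 < \<epsilon>\<close> \<open>0 < \<tau>\<close> by simp
  then have "m > 0"
    using large by (simp add: m_def)
  then have "t > 0"
    using n \<open>0 < \<epsilon>\<close> \<open>0 < \<tau>\<close> by (simp add: t_def)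
  have "prob_samples n V ?U (\<lambda>S. \<not> outputs_yes n \<epsilon> E \<tau> S) \<le>
      expect_samples n V ?U (\<lambda>S. (?Z S - m * (1 / n))^2) / t^2"
  proof (rule prob_samples_chebyshev[OF U(2) \<open>t > 0\<close>])
    fix S assume "\<not> outputs_yes n \<epsilon> E \<tau> S"
    then show "t \<le> \<bar>?Z S - m * (1 / n)\<bar>"
      using n by (simp add: outputs_yes_def m_def t_def field_simps)
  qed
  also have "\<dots> = m * (1 / n - (1 / n)^2) / t^2"
    using expect_collisions_centered_sq[OF G U(1), unfolded p2 p3] by (simp add: m_def)
  also have "\<dots> \<le> 1/4"
    using collision_variance_uniform_le[OF _ \<open>m > 0\<close> mlarge] n \<open>t > 0\<close> by (simp add: t_def divide_le_eq)
  finally show ?thesis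
    using prob_samples_not[OF comparison_graph_finite(1)[OF G] U(1)] by simp
qed

lemma far_distribution_rejected:
  assumes n: "n \<ge> 1" and e: "0 < \<epsilon>" "\<epsilon> \<le> 1" and t: "0 < \<tau>" "\<tau> < 1"
    and G: "comparison_graph V E"
    and large: "real (card E) \<ge> 16 * real n / ((1 - \<tau>)^2 * \<epsilon>^4)"
    and sparse: "real (cG V E) / (real (card E))^2 \<le> (1 - \<tau>)^2 * \<epsilon>^2 / (16 * sqrt (real n))"
    and P: "is_distrib n P" and far: "l1dist n P (unif n) \<ge> \<epsilon>"
  shows "prob_samples n V P (\<lambda>S. \<not> outputs_yes n \<epsilon> E \<tau> S) \<ge> 3/4"
proof -
  let ?Z = "\<lambda>S. real (collisions E S)"
  define m where "m = real (card E)"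
  define c where "c = real (cG V E)"
  define d where "d = l2dist_sq n P (unif n)"
  define x3 where "x3 = (\<Sum>i=1..n. (P i - 1 / n)^3)"
  define t where "t = m * (d - \<tau> * \<epsilon>^2 / n)"
  have P1: "(\<Sum>i=1..n. P i) = 1" and P_nonneg: "\<And>i. i \<in> {1..n} \<Longrightarrow> P i \<ge> 0"
    using P unfolding is_distrib_def by auto
  have mlarge: "16 * real n \<le> m * (1 - \<tau>)^2 * \<epsilon>^4"
    using large e t by (simp add: m_def pos_divide_le_eq mult.assoc)
  have "0 < 16 * real n / ((1 - \<tau>)^2 * \<epsilon>^4)"
    using n e t by simp
  then have "m > 0"
    using large by (simp add: m_def)
  have c_le: "c \<le> m^2 * (1 - \<tau>)^2 * \<epsilon>^2 / (16 * sqrt n)"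
    using sparse \<open>m > 0\<close> by (simp add: m_def c_def divide_le_eq mult_ac)
  have d_ge: "\<epsilon>^2 / n \<le> d"
    unfolding d_def using n e(1) far by (intro l2dist_sq_ge_if_l1dist_ge) auto
  have x3_le: "x3 \<le> sqrt d * d"
    using sum_power3_le[of "{1..n}" "\<lambda>i. P i - 1 / n"]
    by (simp add: x3_def d_def l2dist_sq_def unif_def)
  have "\<tau> * (\<epsilon>^2 / n) < \<epsilon>^2 / n"
    using t e n by (intro mult_strict_right_mono[of \<tau> 1, simplified]) auto
  then have "t > 0"
    using d_ge \<open>m > 0\<close> by (simp add: t_def)
  have "prob_samples n V P (outputs_yes n \<epsilon> E \<tau>) \<le>
      expect_samples n V P (\<lambda>S. (?Z S - m * (1 / n + d))^2) / t^2"
  proof (rule prob_samples_chebyshev[OF P_nonneg \<open>t > 0\<close>])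
    fix S assume "outputs_yes n \<epsilon> E \<tau> S"
    moreover have "m * (1 + \<tau> * \<epsilon>^2) / n = m * (1 / n + d) - t"
      using n by (simp add: t_def field_simps)
    ultimately have "?Z S < m * (1 / n + d) - t"
      by (simp add: outputs_yes_def m_def)
    then show "t \<le> \<bar>?Z S - m * (1 / n + d)\<bar>"
      by linarith
  qed
  also have "\<dots> = (m * ((1 / n + d) - (1 / n + d)^2) + c * (d / n + x3 - d^2)) / t^2"
    unfolding m_def c_def d_def x3_def expect_collisions_centered_sq_l2dist[OF G n P1] ..
  also have "\<dots> \<le> 1/4"
    using collision_variance_far_le[OF _ e t \<open>m > 0\<close> mlarge _ c_le d_ge x3_le] n \<open>t > 0\<close>
    by (simp add: t_def c_def divide_le_eq)
  finally show ?thesis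
    using prob_samples_not[OF comparison_graph_finite(1)[OF G] P1, of "outputs_yes n \<epsilon> E \<tau>"] by simp
qed

theorem theorem1:
  fixes n :: nat and \<epsilon> \<tau> :: real and V :: "'a set" and E :: "'a set set"
  assumes "n \<ge> 1"
    and "0 < \<epsilon>" and "\<epsilon> \<le> 1"
    and "0 < \<tau>" and "\<tau> < 1"
    and "comparison_graph V E"
    and "real (card E) \<ge> 4 * real n / (\<tau>^2 * \<epsilon>^4)"
    and "real (card E) \<ge> 16 * real n / ((1 - \<tau>)^2 * \<epsilon>^4)"
    and "real (cG V E) / (real (card E))^2 \<le> (1 - \<tau>)^2 * \<epsilon>^2 / (16 * sqrt (real n))"
  shows "is_uniformity_tester n \<epsilon> V E \<tau>"
  unfolding is_uniformity_tester_def
  using uniform_accepted[OF assms(1,2,4,6,7)] far_distribution_rejected[OF assms(1-6,8,9)] by blast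

end
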